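(* Let $\bar M$ be an upper bound on the optimal value $M_{adj}=\min_{\sigma\in\Sigma}Q_\Gamma(\sigma)$ of the Adjustable-Robust RCPSP (for instance $\bar M=\sum_{i\in J}(p_i+\hat d_i)$), where $Q_\Gamma(\sigma)=\max_{\delta\in\Delta}\min\{x_t:x\text{ schedule of }(\bar J,A_\sigma,p+\delta)\}$ (with value $+\infty$ if no schedule exists). Consider the mixed-integer program $(F_{adj})$ with variables $\sigma\in\{0,1\}^P$, $f=(f^k_{ij})\ge 0$, and $x^\gamma_j\ge 0$ for $j\in\bar J,\gamma\in\{0,\dots,\Gamma\}$: minimize $x^\Gamma_t$ subject to (i) $x^\gamma_j-x^\gamma_i\ge p_i-\bar M(1-\sigma_{ij})$ for all $(i,j)\in P$, $\gamma\le\Gamma$; (ii) $x^\gamma_j-x^{\gamma+1}_i\ge p_i+\hat d_i-\bar M(1-\sigma_{ij})$ for all $(i,j)\in P$, $\gamma<\Gamma$; (iii) $x^\Gamma_t-x^\gamma_t\ge 0$ for all $\gamma<\Gamma$; together with the flow constraints (F) on $(\sigma,f)$. Then the optimal value of $(F_{adj})$ equals $M_{adj}$, and for any optimal solution $(\sigma,f,x)$ of $(F_{adj})$, $\sigma$ is an optimal sequencing decision of the Adjustable-Robust RCPSP, i.e., $Q_\Gamma(\sigma)=M_{adj}$.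
   Context: Jobs form a finite set $J$; $\bar J=J\cup\{s,t\}$. $(\bar J,A)$ is a directed acyclic precedence graph with unique source $s$ and unique sink $t$, every vertex on an $s$–$t$ path. Processing times $p\in\mathbb{R}_{>0}^J$, $p_s=p_t=0$; for $\delta\in\mathbb{R}_+^J$ set $\delta_s=\delta_t=0$, and $\hat d_s=\hat d_t=0$. A schedule of $(\bar J,E,q)$ is $x\in\mathbb{R}_+^{\bar J}$ with $x_j-x_i\ge q_i$ for all $(i,j)\in E$; its makespan is $x_t$. Resources $\mathcal R$, requirements $r_{ik}\ge0$, availabilities $R_k\ge0$, $\tilde r_{ik}=R_k$ if $i\in\{s,t\}$ else $r_{ik}$. $P=\{(i,j):i,j\in\bar J,i\ne j\}$. Flow constraints (F) on $(\sigma,f)$ with $f\ge 0$: $\sigma_{ij}=1$ for all $(i,j)\in A$; $f^k_{ij}\le\min\{\tilde r_{ik},\tilde r_{jk}\}\sigma_{ij}$ for all $(i,j)\in P,k\in\mathcal R$; $\sum_{j:(i,j)\in P}f^k_{ij}=\tilde r_{ik}$ for all $k$, $i\in J\cup\{s\}$; $\sum_{j:(j,i)\in P}f^k_{ji}=\tilde r_{ik}$ for all $k$, $i\in J\cup\{t\}$. $\Sigma$ is the set of $\sigma\in\{0,1\}^P$ for which some $f\ge0$ satisfies (F). $A_\sigma=\{(i,j)\in P:\sigma_{ij}=1\}$. $\Delta=\{(\hat d_iu_i)_{i\in J}:u\in\{0,1\}^J,\sum_iu_i\le\Gamma\}$ for given $\hat d\in\mathbb{R}_+^J$ and integer $\Gamma\ge0$.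 *)

theory Defs
  imports Complex_Main "HOL-Library.Extended_Real"
begin

text \<open>Jobs have type 'a, resources type 'r. Vectors indexed by a finite set
 are represented as functions; 0/1-vectors sigma on P are real-valued functions
 with values in {0,1} on P and 0 outside P.\<close>

definition Jbar :: "'a set \<Rightarrow> 'a \<Rightarrow> 'a \<Rightarrow> 'a set" where
  "Jbar J s t = J \<union> {s, t}"

definition Ppairs :: "'a set \<Rightarrow> ('a \<times> 'a) set" where
  "Ppairs Jb = {(i, j). i \<in> Jb \<and> j \<in> Jb \<and> i \<noteq> j}"

definition rtil :: "'a \<Rightarrow> 'a \<Rightarrow> ('r \<Rightarrow> real) \<Rightarrow> ('a \<Rightarrow> 'r \<Rightarrow> real) \<Rightarrow> 'a \<Rightarrow> 'r \<Rightarrow> real" where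
  "rtil s t R r i k = (if i = s \<or> i = t then R k else r i k)"

definition flow_ok ::
  "'a set \<Rightarrow> 'a \<Rightarrow> 'a \<Rightarrow> ('a \<times> 'a) set \<Rightarrow> 'r set \<Rightarrow> ('a \<Rightarrow> 'r \<Rightarrow> real) \<Rightarrow> ('r \<Rightarrow> real)
    \<Rightarrow> ('a \<times> 'a \<Rightarrow> real) \<Rightarrow> ('r \<Rightarrow> 'a \<times> 'a \<Rightarrow> real) \<Rightarrow> bool" where
  "flow_ok J s t A Res r R \<sigma> f \<longleftrightarrow>
     (let P = Ppairs (Jbar J s t); rt = rtil s t R r in
       (\<forall>e\<in>A. \<sigma> e = 1) \<and>
       (\<forall>(i, j)\<in>P. \<forall>k\<in>Res. 0 \<le> f k (i, j) \<and> f k (i, j) \<le> min (rt i k) (rt j k) * \<sigma> (i, j)) \<and>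
       (\<forall>k\<in>Res. \<forall>i\<in>J \<union> {s}. (\<Sum>j\<in>{j. (i, j) \<in> P}. f k (i, j)) = rt i k) \<and>
       (\<forall>k\<in>Res. \<forall>i\<in>J \<union> {t}. (\<Sum>j\<in>{j. (j, i) \<in> P}. f k (j, i)) = rt i k))"

definition binary_on :: "('a \<times> 'a) set \<Rightarrow> ('a \<times> 'a \<Rightarrow> real) \<Rightarrow> bool" where
  "binary_on P \<sigma> \<longleftrightarrow> (\<forall>e\<in>P. \<sigma> e \<in> {0, 1}) \<and> (\<forall>e. e \<notin> P \<longrightarrow> \<sigma> e = 0)"

definition SigmaSet ::
  "'a set \<Rightarrow> 'a \<Rightarrow> 'a \<Rightarrow> ('a \<times> 'a) set \<Rightarrow> 'r set \<Rightarrow> ('a \<Rightarrow> 'r \<Rightarrow> real) \<Rightarrow> ('r \<Rightarrow> real)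
    \<Rightarrow> ('a \<times> 'a \<Rightarrow> real) set" where
  "SigmaSet J s t A Res r R =
     {\<sigma>. binary_on (Ppairs (Jbar J s t)) \<sigma> \<and> (\<exists>f. flow_ok J s t A Res r R \<sigma> f)}"

definition A_of :: "('a \<times> 'a) set \<Rightarrow> ('a \<times> 'a \<Rightarrow> real) \<Rightarrow> ('a \<times> 'a) set" where
  "A_of P \<sigma> = {e \<in> P. \<sigma> e = 1}"

definition is_schedule :: "'a set \<Rightarrow> ('a \<times> 'a) set \<Rightarrow> ('a \<Rightarrow> real) \<Rightarrow> ('a \<Rightarrow> real) \<Rightarrow> bool" where
  "is_schedule Jb E q x \<longleftrightarrow> (\<forall>j\<in>Jb. 0 \<le> x j) \<and> (\<forall>(i, j)\<in>E. x j - x i \<ge> q i)"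

definition Delta :: "'a set \<Rightarrow> ('a \<Rightarrow> real) \<Rightarrow> nat \<Rightarrow> ('a \<Rightarrow> real) set" where
  "Delta J dhat \<Gamma> =
     {(\<lambda>i. if i \<in> J then dhat i * real (u i) else 0) | u.
        (\<forall>i\<in>J. u i \<in> {0, 1}) \<and> (\<Sum>i\<in>J. u i) \<le> \<Gamma>}"

definition Q_Gamma ::
  "'a set \<Rightarrow> 'a \<Rightarrow> 'a \<Rightarrow> ('a \<Rightarrow> real) \<Rightarrow> ('a \<Rightarrow> real) \<Rightarrow> nat \<Rightarrow> ('a \<times> 'a \<Rightarrow> real) \<Rightarrow> ereal" where
  "Q_Gamma J s t p dhat \<Gamma> \<sigma> =
     (SUP \<delta>\<in>Delta J dhat \<Gamma>.
        Inf {ereal (x t) | x. is_schedule (Jbar J s t) (A_of (Ppairs (Jbar J s t)) \<sigma>) (\<lambda>i. p i + \<delta> i) x})"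

definition M_adj ::
  "'a set \<Rightarrow> 'a \<Rightarrow> 'a \<Rightarrow> ('a \<times> 'a) set \<Rightarrow> 'r set \<Rightarrow> ('a \<Rightarrow> 'r \<Rightarrow> real) \<Rightarrow> ('r \<Rightarrow> real)
    \<Rightarrow> ('a \<Rightarrow> real) \<Rightarrow> ('a \<Rightarrow> real) \<Rightarrow> nat \<Rightarrow> ereal" where
  "M_adj J s t A Res r R p dhat \<Gamma> =
     (INF \<sigma>\<in>SigmaSet J s t A Res r R. Q_Gamma J s t p dhat \<Gamma> \<sigma>)"

definition Fadj_feasible ::
  "'a set \<Rightarrow> 'a \<Rightarrow> 'a \<Rightarrow> ('a \<times> 'a) set \<Rightarrow> 'r set \<Rightarrow> ('a \<Rightarrow> 'r \<Rightarrow> real) \<Rightarrow> ('r \<Rightarrow> real)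
    \<Rightarrow> ('a \<Rightarrow> real) \<Rightarrow> ('a \<Rightarrow> real) \<Rightarrow> nat \<Rightarrow> real
    \<Rightarrow> ('a \<times> 'a \<Rightarrow> real) \<Rightarrow> ('r \<Rightarrow> 'a \<times> 'a \<Rightarrow> real) \<Rightarrow> (nat \<Rightarrow> 'a \<Rightarrow> real) \<Rightarrow> bool" where
  "Fadj_feasible J s t A Res r R p dhat \<Gamma> Mbar \<sigma> f x \<longleftrightarrow>
     (let Jb = Jbar J s t; P = Ppairs Jb in
       binary_on P \<sigma> \<and>
       flow_ok J s t A Res r R \<sigma> f \<and>
       (\<forall>\<gamma>\<le>\<Gamma>. \<forall>j\<in>Jb. 0 \<le> x \<gamma> j) \<and>
       (\<forall>(i, j)\<in>P. \<forall>\<gamma>\<le>\<Gamma>. x \<gamma> j - x \<gamma> i \<ge> p i - Mbar * (1 - \<sigma> (i, j))) \<and>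
       (\<forall>(i, j)\<in>P. \<forall>\<gamma><\<Gamma>. x \<gamma> j - x (Suc \<gamma>) i \<ge> p i + dhat i - Mbar * (1 - \<sigma> (i, j))) \<and>
       (\<forall>\<gamma><\<Gamma>. x \<Gamma> t - x \<gamma> t \<ge> 0))"

end

theory Submission
  imports Defs
begin

(* Lower bound: for a feasible (sigma, f, x) the running maxima z^g = max {x^g' | g <= g' <= Gamma}
   are nonincreasing in g and still satisfy (i) and (ii) on the arcs of sigma. For a scenario
   deviating on a set U of at most Gamma jobs, starting every job j at z^(Gamma - n_j)_j, where n_j
   counts the jobs of U that precede j, is a schedule finishing by x^Gamma_t. Hence
   Q_Gamma(sigma) <= x^Gamma_t.
   Upper bound: for sigma attaining M_adj, let x^g_j be the largest earliest start of j over the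
   scenarios with at most Gamma - g deviating jobs, and pin x^g_t to Q_Gamma(sigma). Constraint (i)
   holds scenario by scenario, and (ii) because adding i to a scenario with at most Gamma - g - 1
   deviations stays within the budget Gamma - g. Every such start plus duration is at most
   Q_Gamma(sigma) <= Mbar, so the big-M terms are inactive on pairs with sigma = 0. *)

section \<open>Schedules and earliest starts\<close>

lemma trancl_potential_increase:
  fixes w c :: "'a \<Rightarrow> real"
  assumes arc: "\<And>a b. (a, b) \<in> E \<Longrightarrow> w a + c a \<le> w b"
    and nonneg: "\<And>a b. (a, b) \<in> E \<Longrightarrow> 0 \<le> c a"
    and path: "(i, j) \<in> E\<^sup>+"
  shows "w i + c i \<le> w j"
  using path
proof (induction rule: trancl_induct)
  case (base j)
  then show ?case using arc by blast
next
  case (step j k)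
  then show ?case using arc[OF step(2)] nonneg[OF step(2)] by linarith
qed

lemma is_schedule_arc:
  "is_schedule Jb E q x \<Longrightarrow> (i, j) \<in> E \<Longrightarrow> x i + q i \<le> x j"
  by (auto simp: is_schedule_def)

lemma is_schedule_path:
  assumes x: "is_schedule Jb E q x" and E: "E \<subseteq> Jb \<times> Jb"
    and q: "\<forall>i\<in>Jb. 0 \<le> q i" and path: "(i, j) \<in> E\<^sup>+"
  shows "x i + q i \<le> x j"
  by (rule trancl_potential_increase[OF _ _ path]) (use x E q in \<open>auto simp: is_schedule_def\<close>)

lemma is_schedule_no_positive_cycle:
  assumes "is_schedule Jb E q x" "E \<subseteq> Jb \<times> Jb" "\<forall>i\<in>Jb. 0 \<le> q i" "0 < q i"
  shows "(i, i) \<notin> E\<^sup>+"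
  using is_schedule_path[OF assms(1-3), of i i] assms(4) by force

lemma is_schedule_smaller_weights:
  assumes "is_schedule Jb E q' x" "\<And>i. q i \<le> q' i"
  shows "is_schedule Jb E q x"
proof -
  have "q i \<le> x j - x i" if "(i, j) \<in> E" for i j
    using is_schedule_arc[OF assms(1) that] assms(2)[of i] by linarith
  then show ?thesis
    using assms(1) unfolding is_schedule_def by blast
qed

definition earliest_start :: "'a set \<Rightarrow> ('a \<times> 'a) set \<Rightarrow> ('a \<Rightarrow> real) \<Rightarrow> 'a \<Rightarrow> real" where
  "earliest_start Jb E q j = Inf {x j | x. is_schedule Jb E q x}"

lemma earliest_start_le:
  assumes "j \<in> Jb" "is_schedule Jb E q x"
  shows "earliest_start Jb E q j \<le> x j"
proof -
  have "bdd_below {x j | x. is_schedule Jb E q x}"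
    using assms(1) by (auto simp: bdd_below_def is_schedule_def)
  then show ?thesis
    using assms unfolding earliest_start_def by (auto intro!: cInf_lower)
qed

lemma is_schedule_earliest_start:
  assumes E: "E \<subseteq> Jb \<times> Jb" and ex: "is_schedule Jb E q y"
  shows "is_schedule Jb E q (earliest_start Jb E q)"
proof -
  have ne: "{x j | x. is_schedule Jb E q x} \<noteq> {}" for j
    using ex by auto
  have "0 \<le> earliest_start Jb E q j" if "j \<in> Jb" for j
    unfolding earliest_start_def
    using that by (intro cInf_greatest[OF ne]) (auto simp: is_schedule_def)
  moreover have "earliest_start Jb E q i + q i \<le> earliest_start Jb E q j" if ij: "(i, j) \<in> E" for i j
  proof -
    have "earliest_start Jb E q i + q i \<le> x j" if "is_schedule Jb E q x" for x
      using earliest_start_le[OF _ that, of i] is_schedule_arc[OF that ij] ij E by force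
    then show ?thesis
      unfolding earliest_start_def[of _ _ _ j] by (intro cInf_greatest[OF ne]) auto
  qed
  ultimately show ?thesis
    unfolding is_schedule_def by force
qed

lemma Inf_schedule_eq_earliest_start:
  assumes "E \<subseteq> Jb \<times> Jb" "is_schedule Jb E q y" "j \<in> Jb"
  shows "Inf {ereal (x j) | x. is_schedule Jb E q x} = ereal (earliest_start Jb E q j)"
proof (rule antisym)
  show "Inf {ereal (x j) | x. is_schedule Jb E q x} \<le> ereal (earliest_start Jb E q j)"
    using is_schedule_earliest_start[OF assms(1,2)] by (auto intro!: Inf_lower)
  show "ereal (earliest_start Jb E q j) \<le> Inf {ereal (x j) | x. is_schedule Jb E q x}"
    using earliest_start_le[OF assms(3)] by (auto intro!: Inf_greatest)
qed

section \<open>The uncertainty set\<close>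

lemma Delta_iff:
  assumes "finite J"
  shows "\<delta> \<in> Delta J dhat k \<longleftrightarrow>
    (\<exists>U\<subseteq>J. card U \<le> k \<and> \<delta> = (\<lambda>i. if i \<in> U then dhat i else 0))"
proof
  assume "\<delta> \<in> Delta J dhat k"
  then obtain u where u: "\<forall>i\<in>J. u i \<in> {0, 1}" "(\<Sum>i\<in>J. u i) \<le> k"
    and \<delta>: "\<delta> = (\<lambda>i. if i \<in> J then dhat i * real (u i) else 0)"
    by (auto simp: Delta_def)
  define U where "U = {i \<in> J. u i = 1}"
  have "(\<Sum>i\<in>J. u i) = (\<Sum>i\<in>J. if i \<in> U then 1 else 0)"
    using u(1) by (intro sum.cong) (auto simp: U_def)
  also have "\<dots> = card U"
    using assms by (simp add: sum.If_cases U_def Int_def conj_commute)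
  finally have "card U \<le> k" using u(2) by simp
  moreover have "\<delta> i = (if i \<in> U then dhat i else 0)" for i
    using u(1) by (cases "i \<in> J"; cases "u i = 1") (auto simp: \<delta> U_def)
  moreover have "U \<subseteq> J"
    by (auto simp: U_def)
  ultimately show "\<exists>U\<subseteq>J. card U \<le> k \<and> \<delta> = (\<lambda>i. if i \<in> U then dhat i else 0)"
    by blast
next
  assume "\<exists>U\<subseteq>J. card U \<le> k \<and> \<delta> = (\<lambda>i. if i \<in> U then dhat i else 0)"
  then obtain U where U: "U \<subseteq> J" "card U \<le> k" "\<delta> = (\<lambda>i. if i \<in> U then dhat i else 0)"
    by blast
  define u where "u i = (if i \<in> U then 1 else 0 :: nat)" for i
  have "(\<Sum>i\<in>J. u i) = card U"
    using assms U(1) by (simp add: u_def sum.If_cases Int_absorb1)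
  moreover have "\<delta> = (\<lambda>i. if i \<in> J then dhat i * real (u i) else 0)"
    using U(1) by (auto simp: U(3) u_def fun_eq_iff)
  moreover have "\<forall>i\<in>J. u i \<in> {0, 1}"
    by (simp add: u_def)
  ultimately show "\<delta> \<in> Delta J dhat k"
    unfolding Delta_def using U(2) by auto
qed

lemma Delta_mono: "k \<le> k' \<Longrightarrow> Delta J dhat k \<subseteq> Delta J dhat k'"
  by (auto simp: Delta_def)

lemma zero_in_Delta: "(\<lambda>_. 0) \<in> Delta J dhat k"
  unfolding Delta_def by (rule CollectI, rule exI[of _ "\<lambda>_. 0"]) auto

lemma Delta_nonneg: "\<delta> \<in> Delta J dhat k \<Longrightarrow> \<forall>i\<in>J. 0 \<le> dhat i \<Longrightarrow> 0 \<le> \<delta> i"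
  by (auto simp: Delta_def)

lemma Delta_outside: "\<delta> \<in> Delta J dhat k \<Longrightarrow> i \<notin> J \<Longrightarrow> \<delta> i = 0"
  by (auto simp: Delta_def)

lemma Delta_insert:
  assumes "finite J" "\<forall>i\<in>J. 0 \<le> dhat i" "\<delta> \<in> Delta J dhat k" "i \<in> J"
  shows "\<exists>\<delta>'\<in>Delta J dhat (Suc k). (\<forall>j. \<delta> j \<le> \<delta>' j) \<and> \<delta>' i = dhat i"
proof -
  obtain U where U: "U \<subseteq> J" "card U \<le> k" "\<delta> = (\<lambda>i. if i \<in> U then dhat i else 0)"
    using assms(3) unfolding Delta_iff[OF assms(1)] by blast
  have "card (insert i U) \<le> Suc k"
    using U(2) card_insert_if[OF finite_subset[OF U(1) assms(1)], of i] by auto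
  then have "(\<lambda>j. if j \<in> insert i U then dhat j else 0) \<in> Delta J dhat (Suc k)"
    unfolding Delta_iff[OF assms(1)] using U(1) assms(4) by (intro exI[of _ "insert i U"]) simp
  moreover have "\<delta> j \<le> (if j \<in> insert i U then dhat j else 0)" for j
    using U(1) assms(2,4) by (auto simp: U(3))
  ultimately show ?thesis
    using assms(4) by (intro bexI[of _ "\<lambda>j. if j \<in> insert i U then dhat j else 0"]) simp_all
qed

section \<open>Layered potentials\<close>

lemma layered_potentials_schedule:
  fixes z :: "nat \<Rightarrow> 'a \<Rightarrow> real"
  assumes U: "finite U" "card U \<le> \<Gamma>" and no_cycle: "\<forall>i\<in>U. (i, i) \<notin> E\<^sup>+"
    and nonneg: "\<forall>j\<in>Jb. 0 \<le> z \<Gamma> j"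
    and antimono: "\<And>\<gamma> \<gamma>' j. \<gamma> \<le> \<gamma>' \<Longrightarrow> \<gamma>' \<le> \<Gamma> \<Longrightarrow> z \<gamma>' j \<le> z \<gamma> j"
    and same_layer: "\<And>\<gamma> i j. (i, j) \<in> E \<Longrightarrow> \<gamma> \<le> \<Gamma> \<Longrightarrow> z \<gamma> i + p i \<le> z \<gamma> j"
    and next_layer: "\<And>\<gamma> i j. (i, j) \<in> E \<Longrightarrow> \<gamma> < \<Gamma> \<Longrightarrow> z (Suc \<gamma>) i + p i + d i \<le> z \<gamma> j"
  shows "is_schedule Jb E (\<lambda>i. p i + (if i \<in> U then d i else 0))
           (\<lambda>j. z (\<Gamma> - card {k \<in> U. (k, j) \<in> E\<^sup>+}) j)"
proof -
  define n where "n j = card {k \<in> U. (k, j) \<in> E\<^sup>+}" for j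
  have n_le: "n j \<le> \<Gamma>" for j
    using card_mono[OF U(1), of "{k \<in> U. (k, j) \<in> E\<^sup>+}"] U(2) by (auto simp: n_def)
  have n_arc: "n i + (if i \<in> U then 1 else 0) \<le> n j" if ij: "(i, j) \<in> E" for i j
  proof -
    let ?B = "\<lambda>j. {k \<in> U. (k, j) \<in> E\<^sup>+}"
    have sub: "?B i \<union> (U \<inter> {i}) \<subseteq> ?B j"
      using ij by (auto intro: trancl_into_trancl)
    have "i \<notin> ?B i"
      using no_cycle by auto
    then have "card (?B i \<union> (U \<inter> {i})) = n i + (if i \<in> U then 1 else 0)"
      using U(1) by (auto simp: n_def card_insert_if)
    then show ?thesis
      using card_mono[OF _ sub] U(1) by (simp add: n_def)
  qed
  have arc: "p i + (if i \<in> U then d i else 0) \<le> z (\<Gamma> - n j) j - z (\<Gamma> - n i) i"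
    if ij: "(i, j) \<in> E" for i j
  proof (cases "i \<in> U")
    case False
    have "z (\<Gamma> - n i) i \<le> z (\<Gamma> - n j) i"
      using n_arc[OF ij] n_le[of i] by (intro antimono) auto
    then show ?thesis
      using same_layer[OF ij, of "\<Gamma> - n j"] False by simp
  next
    case True
    have "z (\<Gamma> - n i) i \<le> z (Suc (\<Gamma> - n j)) i"
      using n_arc[OF ij] n_le[of i] n_le[of j] True by (intro antimono) auto
    moreover have "\<Gamma> - n j < \<Gamma>"
      using n_arc[OF ij] n_le[of j] True by auto
    ultimately show ?thesis
      using next_layer[OF ij] True by fastforce
  qed
  have "0 \<le> z (\<Gamma> - n j) j" if "j \<in> Jb" for j
    using antimono[of "\<Gamma> - n j" \<Gamma> j] nonneg that by fastforce
  with arc show ?thesis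
    unfolding is_schedule_def n_def[symmetric] by blast
qed

definition tail_max :: "(nat \<Rightarrow> 'a \<Rightarrow> real) \<Rightarrow> nat \<Rightarrow> nat \<Rightarrow> 'a \<Rightarrow> real" where
  "tail_max x \<Gamma> \<gamma> j = Max ((\<lambda>g. x g j) ` {\<gamma>..\<Gamma>})"

lemma tail_max_ge: "\<gamma> \<le> g \<Longrightarrow> g \<le> \<Gamma> \<Longrightarrow> x g j \<le> tail_max x \<Gamma> \<gamma> j"
  unfolding tail_max_def by (intro Max_ge) auto

lemma tail_max_attained: "\<gamma> \<le> \<Gamma> \<Longrightarrow> \<exists>g\<in>{\<gamma>..\<Gamma>}. tail_max x \<Gamma> \<gamma> j = x g j"
proof -
  assume "\<gamma> \<le> \<Gamma>"
  then have "tail_max x \<Gamma> \<gamma> j \<in> (\<lambda>g. x g j) ` {\<gamma>..\<Gamma>}"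
    unfolding tail_max_def by (intro Max_in) auto
  then show ?thesis by auto
qed

lemma tail_max_last [simp]: "tail_max x \<Gamma> \<Gamma> j = x \<Gamma> j"
  by (simp add: tail_max_def)

lemma tail_max_antimono: "\<gamma> \<le> \<gamma>' \<Longrightarrow> \<gamma>' \<le> \<Gamma> \<Longrightarrow> tail_max x \<Gamma> \<gamma>' j \<le> tail_max x \<Gamma> \<gamma> j"
  using tail_max_attained[of \<gamma>' \<Gamma> x j] tail_max_ge[of \<gamma> _ \<Gamma> x j] by force

lemma tail_max_same_layer:
  assumes "\<And>g. g \<le> \<Gamma> \<Longrightarrow> x g i + c \<le> x g j" "\<gamma> \<le> \<Gamma>"
  shows "tail_max x \<Gamma> \<gamma> i + c \<le> tail_max x \<Gamma> \<gamma> j"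
proof -
  obtain g where "g \<in> {\<gamma>..\<Gamma>}" "tail_max x \<Gamma> \<gamma> i = x g i"
    using tail_max_attained[OF assms(2), of x i] by blast
  then show ?thesis
    using assms(1)[of g] tail_max_ge[of \<gamma> g \<Gamma> x j] by simp
qed

lemma tail_max_next_layer:
  assumes "\<And>g. g < \<Gamma> \<Longrightarrow> x (Suc g) i + c \<le> x g j" "\<gamma> < \<Gamma>"
  shows "tail_max x \<Gamma> (Suc \<gamma>) i + c \<le> tail_max x \<Gamma> \<gamma> j"
proof -
  obtain g where g: "g \<in> {Suc \<gamma>..\<Gamma>}" "tail_max x \<Gamma> (Suc \<gamma>) i = x g i"
    using tail_max_attained[of "Suc \<gamma>" \<Gamma> x i] assms(2) by auto
  then obtain g' where "g = Suc g'"
    by (cases g) auto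
  then show ?thesis
    using assms(1)[of g'] tail_max_ge[of \<gamma> g' \<Gamma> x j] g by simp
qed

section \<open>The formulation (F_adj)\<close>

lemma big_M_constraint:
  fixes a b c Mbar \<sigma> :: real
  assumes "\<sigma> \<in> {0, 1}" "\<sigma> = 1 \<Longrightarrow> a + c \<le> b" "0 \<le> b" "a + c \<le> Mbar"
  shows "c - Mbar * (1 - \<sigma>) \<le> b - a"
  using assms by auto

locale adjustable_rcpsp =
  fixes J :: "'a set" and s t :: 'a and A :: "('a \<times> 'a) set"
    and Res :: "'r set" and r :: "'a \<Rightarrow> 'r \<Rightarrow> real" and R :: "'r \<Rightarrow> real"
    and p dhat :: "'a \<Rightarrow> real" and \<Gamma> :: nat and Mbar :: real
  assumes finJ: "finite J" and sJ: "s \<notin> J" and tJ: "t \<notin> J"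
    and A_sub: "A \<subseteq> Jbar J s t \<times> Jbar J s t"
    and acyc: "acyclic A"
    and on_path: "\<forall>j\<in>Jbar J s t. (s, j) \<in> A\<^sup>* \<and> (j, t) \<in> A\<^sup>*"
    and p_pos: "\<forall>i\<in>J. p i > 0" and p_s: "p s = 0" and p_t: "p t = 0"
    and dhat_nn: "\<forall>i\<in>J. dhat i \<ge> 0" and dhat_s: "dhat s = 0" and dhat_t: "dhat t = 0"
begin

abbreviation "Jb \<equiv> Jbar J s t"
abbreviation "P \<equiv> Ppairs Jb"
abbreviation "E \<sigma> \<equiv> A_of P \<sigma>"
abbreviation "Q \<equiv> Q_Gamma J s t p dhat \<Gamma>"
abbreviation "M \<equiv> M_adj J s t A Res r R p dhat \<Gamma>"
abbreviation "feasible \<equiv> Fadj_feasible J s t A Res r R p dhat \<Gamma> Mbar"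

lemma mem_Jb_iff: "i \<in> Jb \<longleftrightarrow> i \<in> J \<or> i = s \<or> i = t"
  by (auto simp: Jbar_def)

lemma t_in_Jb: "t \<in> Jb"
  by (simp add: mem_Jb_iff)

lemma finite_P: "finite P"
proof -
  have "P \<subseteq> Jb \<times> Jb"
    by (auto simp: Ppairs_def)
  then show ?thesis
    using finJ finite_subset by (auto simp: Jbar_def)
qed

lemma mem_E_iff: "e \<in> E \<sigma> \<longleftrightarrow> e \<in> P \<and> \<sigma> e = 1"
  by (simp add: A_of_def)

lemma E_subset: "E \<sigma> \<subseteq> Jb \<times> Jb"
  by (auto simp: A_of_def Ppairs_def)

lemma p_nonneg: "i \<in> Jb \<Longrightarrow> 0 \<le> p i"
  using p_pos p_s p_t by (auto simp: mem_Jb_iff intro: less_imp_le)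

lemma p_plus_Delta_nonneg: "\<delta> \<in> Delta J dhat k \<Longrightarrow> i \<in> Jb \<Longrightarrow> 0 \<le> p i + \<delta> i"
  using p_nonneg Delta_nonneg[OF _ dhat_nn] by (simp add: add_nonneg_nonneg)

lemma flow_ok_precedences:
  assumes "flow_ok J s t A Res r R \<sigma> f"
  shows "A \<subseteq> E \<sigma>"
proof
  fix e assume e: "e \<in> A"
  then have "e \<in> P"
    using A_sub acyc by (cases e) (auto simp: Ppairs_def acyclic_def)
  moreover have "\<sigma> e = 1"
    using assms e by (auto simp: flow_ok_def Let_def)
  ultimately show "e \<in> E \<sigma>"
    by (simp add: mem_E_iff)
qed

lemma flow_ok_path_to_sink:
  assumes "flow_ok J s t A Res r R \<sigma> f" "i \<in> Jb" "i \<noteq> t"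
  shows "(i, t) \<in> (E \<sigma>)\<^sup>+"
proof -
  have "(i, t) \<in> (E \<sigma>)\<^sup>*"
    using rtrancl_mono[OF flow_ok_precedences[OF assms(1)]] on_path assms(2) by blast
  then show ?thesis
    using assms(3) by (simp add: rtrancl_eq_or_trancl)
qed

lemma flow_ok_path_from_source:
  assumes "flow_ok J s t A Res r R \<sigma> f" "i \<in> Jb" "i \<noteq> s"
  shows "(s, i) \<in> (E \<sigma>)\<^sup>+"
proof -
  have "(s, i) \<in> (E \<sigma>)\<^sup>*"
    using rtrancl_mono[OF flow_ok_precedences[OF assms(1)]] on_path assms(2) by blast
  then show ?thesis
    using assms(3) by (simp add: rtrancl_eq_or_trancl)
qed

lemma finite_SigmaSet: "finite (SigmaSet J s t A Res r R)"
proof -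
  have "SigmaSet J s t A Res r R \<subseteq> (\<lambda>S e. if e \<in> S then 1 else 0) ` Pow P"
  proof
    fix \<sigma> assume "\<sigma> \<in> SigmaSet J s t A Res r R"
    then have "\<sigma> = (\<lambda>e. if e \<in> E \<sigma> then 1 else 0)"
      by (fastforce simp: SigmaSet_def binary_on_def A_of_def)
    then show "\<sigma> \<in> (\<lambda>S e. if e \<in> S then 1 else 0) ` Pow P"
      using E_subset by (intro image_eqI[where x = "E \<sigma>"]) (auto simp: A_of_def)
  qed
  then show ?thesis
    using finite_P finite_subset by blast
qed

lemma Q_Gamma_nonneg: "0 \<le> Q \<sigma>"
proof -
  have "0 \<le> Inf {ereal (x t) | x. is_schedule Jb (E \<sigma>) (\<lambda>i. p i + 0) x}"
    using t_in_Jb by (auto intro!: Inf_greatest simp: is_schedule_def)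
  also have "\<dots> \<le> Q \<sigma>"
    unfolding Q_Gamma_def by (rule SUP_upper[OF zero_in_Delta])
  finally show ?thesis .
qed

lemma M_adj_nonneg: "0 \<le> M"
  unfolding M_adj_def by (auto intro!: INF_greatest Q_Gamma_nonneg)

lemma Fadj_feasible_SigmaSet: "feasible \<sigma> f x \<Longrightarrow> \<sigma> \<in> SigmaSet J s t A Res r R"
  by (auto simp: Fadj_feasible_def Let_def SigmaSet_def)

lemma Fadj_feasible_arcs:
  assumes "feasible \<sigma> f x" "(i, j) \<in> E \<sigma>"
  shows "\<gamma> \<le> \<Gamma> \<Longrightarrow> x \<gamma> i + p i \<le> x \<gamma> j"
    and "\<gamma> < \<Gamma> \<Longrightarrow> x (Suc \<gamma>) i + p i + dhat i \<le> x \<gamma> j"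
  using assms by (fastforce simp: Fadj_feasible_def Let_def mem_E_iff)+

lemma Fadj_feasibleI:
  assumes bin: "binary_on P \<sigma>" and flow: "flow_ok J s t A Res r R \<sigma> f"
    and nonneg: "\<And>\<gamma> j. \<gamma> \<le> \<Gamma> \<Longrightarrow> j \<in> Jb \<Longrightarrow> 0 \<le> x \<gamma> j"
    and bound: "\<And>\<gamma> i. \<gamma> \<le> \<Gamma> \<Longrightarrow> i \<in> Jb \<Longrightarrow> x \<gamma> i + p i \<le> Mbar"
    and bound_next: "\<And>\<gamma> i. \<gamma> < \<Gamma> \<Longrightarrow> i \<in> Jb \<Longrightarrow> x (Suc \<gamma>) i + p i + dhat i \<le> Mbar"
    and arc: "\<And>\<gamma> i j. (i, j) \<in> E \<sigma> \<Longrightarrow> \<gamma> \<le> \<Gamma> \<Longrightarrow> x \<gamma> i + p i \<le> x \<gamma> j"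
    and arc_next: "\<And>\<gamma> i j. (i, j) \<in> E \<sigma> \<Longrightarrow> \<gamma> < \<Gamma> \<Longrightarrow> x (Suc \<gamma>) i + p i + dhat i \<le> x \<gamma> j"
    and sink: "\<And>\<gamma>. \<gamma> < \<Gamma> \<Longrightarrow> x \<gamma> t \<le> x \<Gamma> t"
  shows "feasible \<sigma> f x"
proof -
  have "p i - Mbar * (1 - \<sigma> (i, j)) \<le> x \<gamma> j - x \<gamma> i"
    if ij: "(i, j) \<in> P" and \<gamma>: "\<gamma> \<le> \<Gamma>" for i j \<gamma>
  proof (rule big_M_constraint)
    show "\<sigma> (i, j) \<in> {0, 1}"
      using bin ij by (simp add: binary_on_def)
    show "\<sigma> (i, j) = 1 \<Longrightarrow> x \<gamma> i + p i \<le> x \<gamma> j"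
      using arc ij \<gamma> by (simp add: mem_E_iff)
    show "0 \<le> x \<gamma> j" "x \<gamma> i + p i \<le> Mbar"
      using ij \<gamma> nonneg bound by (auto simp: Ppairs_def)
  qed
  moreover have "p i + dhat i - Mbar * (1 - \<sigma> (i, j)) \<le> x \<gamma> j - x (Suc \<gamma>) i"
    if ij: "(i, j) \<in> P" and \<gamma>: "\<gamma> < \<Gamma>" for i j \<gamma>
  proof (rule big_M_constraint)
    show "\<sigma> (i, j) \<in> {0, 1}"
      using bin ij by (simp add: binary_on_def)
    show "\<sigma> (i, j) = 1 \<Longrightarrow> x (Suc \<gamma>) i + (p i + dhat i) \<le> x \<gamma> j"
      using arc_next[of i j \<gamma>] ij \<gamma> by (simp add: mem_E_iff add.assoc)
    show "0 \<le> x \<gamma> j" "x (Suc \<gamma>) i + (p i + dhat i) \<le> Mbar"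
      using ij \<gamma> nonneg bound_next[of \<gamma> i] by (auto simp: Ppairs_def add.assoc)
  qed
  ultimately show ?thesis
    using bin flow nonneg sink by (auto simp: Fadj_feasible_def Let_def)
qed

lemma Fadj_feasible_no_positive_cycle:
  assumes feas: "feasible \<sigma> f x" and i: "i \<in> J"
  shows "(i, i) \<notin> (E \<sigma>)\<^sup>+"
proof -
  have "x \<Gamma> i + p i \<le> x \<Gamma> j" if "(i, j) \<in> E \<sigma>" for i j
    using Fadj_feasible_arcs(1)[OF feas that] by simp
  then have "is_schedule Jb (E \<sigma>) p (x \<Gamma>)"
    using feas by (fastforce simp: is_schedule_def Fadj_feasible_def Let_def)
  then show ?thesis
    by (rule is_schedule_no_positive_cycle[OF _ E_subset]) (use p_nonneg p_pos i in auto)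
qed

lemma Fadj_feasible_tail_max_sink:
  assumes "feasible \<sigma> f x"
  shows "tail_max x \<Gamma> 0 t \<le> x \<Gamma> t"
proof -
  obtain g where "g \<le> \<Gamma>" "tail_max x \<Gamma> 0 t = x g t"
    using tail_max_attained[of 0 \<Gamma> x t] by auto
  then show ?thesis
    using assms by (cases "g = \<Gamma>") (auto simp: Fadj_feasible_def Let_def)
qed

lemma Q_Gamma_le_Fadj_objective:
  assumes feas: "feasible \<sigma> f x"
  shows "Q \<sigma> \<le> ereal (x \<Gamma> t)"
proof -
  have nonneg: "\<forall>j\<in>Jb. 0 \<le> x \<Gamma> j"
    using feas by (simp add: Fadj_feasible_def Let_def)
  note arc = Fadj_feasible_arcs[OF feas]
  let ?z = "tail_max x \<Gamma>"
  show ?thesis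
    unfolding Q_Gamma_def
  proof (rule SUP_least)
    fix \<delta> assume "\<delta> \<in> Delta J dhat \<Gamma>"
    then obtain U where U: "U \<subseteq> J" "card U \<le> \<Gamma>" "\<delta> = (\<lambda>i. if i \<in> U then dhat i else 0)"
      unfolding Delta_iff[OF finJ] by blast
    let ?y = "\<lambda>j. ?z (\<Gamma> - card {k \<in> U. (k, j) \<in> (E \<sigma>)\<^sup>+}) j"
    have "is_schedule Jb (E \<sigma>) (\<lambda>i. p i + \<delta> i) ?y"
      unfolding U(3)
    proof (rule layered_potentials_schedule)
      show "finite U"
        using U(1) finJ finite_subset by blast
      show "card U \<le> \<Gamma>" "\<forall>i\<in>U. (i, i) \<notin> (E \<sigma>)\<^sup>+" "\<forall>j\<in>Jb. 0 \<le> ?z \<Gamma> j"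
        using U Fadj_feasible_no_positive_cycle[OF feas] nonneg by auto
      show "?z \<gamma>' j \<le> ?z \<gamma> j" if "\<gamma> \<le> \<gamma>'" "\<gamma>' \<le> \<Gamma>" for \<gamma> \<gamma>' j
        using that by (rule tail_max_antimono)
      show "?z \<gamma> i + p i \<le> ?z \<gamma> j" if "(i, j) \<in> E \<sigma>" "\<gamma> \<le> \<Gamma>" for \<gamma> i j
        using tail_max_same_layer[of \<Gamma> x i "p i" j \<gamma>] arc(1)[OF that(1)] that(2) by simp
      show "?z (Suc \<gamma>) i + p i + dhat i \<le> ?z \<gamma> j" if "(i, j) \<in> E \<sigma>" "\<gamma> < \<Gamma>" for \<gamma> i j
        using tail_max_next_layer[of \<Gamma> x i "p i + dhat i" j \<gamma>] arc(2)[OF that(1)] that(2)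
        by (simp add: add.assoc)
    qed
    moreover have "?y t \<le> x \<Gamma> t"
      using tail_max_antimono[of 0 "\<Gamma> - card {k \<in> U. (k, t) \<in> (E \<sigma>)\<^sup>+}" \<Gamma> x t]
        Fadj_feasible_tail_max_sink[OF feas] by simp
    ultimately show "Inf {ereal (y t) | y. is_schedule Jb (E \<sigma>) (\<lambda>i. p i + \<delta> i) y} \<le> ereal (x \<Gamma> t)"
      by (intro Inf_lower2[of "ereal (?y t)"]) auto
  qed
qed

context
  fixes \<sigma> :: "'a \<times> 'a \<Rightarrow> real" and f :: "'r \<Rightarrow> 'a \<times> 'a \<Rightarrow> real" and Qr :: real
  assumes flow: "flow_ok J s t A Res r R \<sigma> f" and Q_eq: "Q \<sigma> = ereal Qr"
begin

abbreviation est :: "('a \<Rightarrow> real) \<Rightarrow> 'a \<Rightarrow> real" where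
  "est \<delta> \<equiv> earliest_start Jb (E \<sigma>) (\<lambda>i. p i + \<delta> i)"

lemma finite_Q_Gamma_schedule_exists:
  assumes "\<delta> \<in> Delta J dhat \<Gamma>"
  shows "\<exists>x. is_schedule Jb (E \<sigma>) (\<lambda>i. p i + \<delta> i) x"
proof (rule ccontr)
  assume "\<nexists>x. is_schedule Jb (E \<sigma>) (\<lambda>i. p i + \<delta> i) x"
  then have "Inf {ereal (x t) | x. is_schedule Jb (E \<sigma>) (\<lambda>i. p i + \<delta> i) x} = top"
    by simp
  moreover have "Inf {ereal (x t) | x. is_schedule Jb (E \<sigma>) (\<lambda>i. p i + \<delta> i) x} \<le> Q \<sigma>"
    unfolding Q_Gamma_def by (rule SUP_upper[OF assms])
  ultimately show False
    using Q_eq by (simp add: top_ereal_def)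
qed

lemma is_schedule_est: "\<delta> \<in> Delta J dhat \<Gamma> \<Longrightarrow> is_schedule Jb (E \<sigma>) (\<lambda>i. p i + \<delta> i) (est \<delta>)"
  using finite_Q_Gamma_schedule_exists is_schedule_earliest_start[OF E_subset] by blast

lemma est_nonneg: "\<delta> \<in> Delta J dhat \<Gamma> \<Longrightarrow> j \<in> Jb \<Longrightarrow> 0 \<le> est \<delta> j"
  using is_schedule_est by (auto simp: is_schedule_def)

lemma est_sink_le: "\<delta> \<in> Delta J dhat \<Gamma> \<Longrightarrow> est \<delta> t \<le> Qr"
proof -
  assume \<delta>: "\<delta> \<in> Delta J dhat \<Gamma>"
  then have "ereal (est \<delta> t) = Inf {ereal (x t) | x. is_schedule Jb (E \<sigma>) (\<lambda>i. p i + \<delta> i) x}"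
    using Inf_schedule_eq_earliest_start[OF E_subset is_schedule_est t_in_Jb] by simp
  also have "\<dots> \<le> Q \<sigma>"
    unfolding Q_Gamma_def by (rule SUP_upper[OF \<delta>])
  finally show ?thesis
    using Q_eq by simp
qed

lemma est_finish_le:
  assumes \<delta>: "\<delta> \<in> Delta J dhat \<Gamma>" and i: "i \<in> Jb"
  shows "est \<delta> i + p i + \<delta> i \<le> Qr"
proof (cases "i = t")
  case True
  then show ?thesis
    using est_sink_le[OF \<delta>] Delta_outside[OF \<delta> tJ] p_t by simp
next
  case False
  have "est \<delta> i + (p i + \<delta> i) \<le> est \<delta> t"
    using is_schedule_path[OF is_schedule_est[OF \<delta>] E_subset _ flow_ok_path_to_sink[OF flow i False]]
      p_plus_Delta_nonneg[OF \<delta>] by blast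
  then show ?thesis
    using est_sink_le[OF \<delta>] by simp
qed

lemma est_mono:
  assumes "\<delta> \<in> Delta J dhat \<Gamma>" "\<delta>' \<in> Delta J dhat \<Gamma>" "\<And>i. \<delta> i \<le> \<delta>' i" "j \<in> Jb"
  shows "est \<delta> j \<le> est \<delta>' j"
proof -
  have "is_schedule Jb (E \<sigma>) (\<lambda>i. p i + \<delta> i) (est \<delta>')"
    using is_schedule_est[OF assms(2)] by (rule is_schedule_smaller_weights) (simp add: assms(3))
  then show ?thesis
    by (rule earliest_start_le[OF assms(4)])
qed

lemma est_deviate:
  assumes \<delta>: "\<delta> \<in> Delta J dhat k" and k: "k < \<Gamma>" and i: "i \<in> Jb"
  shows "\<exists>\<delta>'\<in>Delta J dhat (Suc k). est \<delta> i + dhat i \<le> est \<delta>' i + \<delta>' i"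
proof (cases "i \<in> J")
  case True
  then obtain \<delta>' where \<delta>': "\<delta>' \<in> Delta J dhat (Suc k)" "\<And>j. \<delta> j \<le> \<delta>' j" "\<delta>' i = dhat i"
    using Delta_insert[OF finJ dhat_nn \<delta>] by blast
  have "est \<delta> i \<le> est \<delta>' i"
    using subsetD[OF Delta_mono[OF less_imp_le[OF k]] \<delta>]
      subsetD[OF Delta_mono[OF Suc_leI[OF k]] \<delta>'(1)]
    by (intro est_mono[OF _ _ \<delta>'(2) i])
  then show ?thesis
    using \<delta>'(1,3) by (intro bexI[of _ \<delta>']) simp_all
next
  case False
  then have "dhat i = 0" "\<delta> i = 0"
    using i dhat_s dhat_t Delta_outside[OF \<delta>] by (auto simp: mem_Jb_iff)
  then show ?thesis
    using subsetD[OF Delta_mono[OF le_SucI[OF order_refl]] \<delta>] by (intro bexI[of _ \<delta>]) simp_all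
qed

lemma no_arc_from_sink:
  assumes "J \<noteq> {}"
  shows "(t, j) \<notin> E \<sigma>"
proof
  assume tj: "(t, j) \<in> E \<sigma>"
  then have "(t, j) \<in> P"
    by (simp add: mem_E_iff)
  then have j: "j \<in> Jb" "j \<noteq> t"
    by (auto simp: Ppairs_def)
  obtain i where i: "i \<in> J" "(i, i) \<in> (E \<sigma>)\<^sup>+"
  proof (cases "j \<in> J")
    case True
    then show ?thesis
      using that flow_ok_path_to_sink[OF flow j] tj by (meson trancl_into_trancl)
  next
    case False
    then have "j = s"
      using j by (auto simp: mem_Jb_iff)
    obtain i where "i \<in> J"
      using assms by blast
    then have "(i, t) \<in> (E \<sigma>)\<^sup>+" "(s, i) \<in> (E \<sigma>)\<^sup>+"
      using flow_ok_path_to_sink[OF flow] flow_ok_path_from_source[OF flow] sJ tJ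
      by (auto simp: mem_Jb_iff)
    then show ?thesis
      using that \<open>i \<in> J\<close> tj \<open>j = s\<close> by (meson trancl_into_trancl trancl_trans)
  qed
  have "(i, i) \<notin> (E \<sigma>)\<^sup>+"
    using is_schedule_no_positive_cycle[OF is_schedule_est[OF zero_in_Delta] E_subset]
      p_nonneg p_pos i(1) by simp
  then show False
    using i(2) by contradiction
qed

definition worst_start :: "nat \<Rightarrow> 'a \<Rightarrow> real" where
  "worst_start k j = (SUP \<delta>\<in>Delta J dhat k. est \<delta> j)"

lemma worst_start_ge:
  assumes "k \<le> \<Gamma>" "j \<in> Jb" "\<delta> \<in> Delta J dhat k"
  shows "est \<delta> j \<le> worst_start k j"
proof -
  have "est \<delta>' j \<le> Qr" if "\<delta>' \<in> Delta J dhat k" for \<delta>'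
    using est_finish_le[of \<delta>' j] p_plus_Delta_nonneg[OF that assms(2)] subsetD[OF Delta_mono[OF assms(1)] that] assms(2)
    by simp
  then have "bdd_above ((\<lambda>\<delta>. est \<delta> j) ` Delta J dhat k)"
    by (intro bdd_aboveI2)
  then show ?thesis
    unfolding worst_start_def using assms(3) by (rule cSUP_upper2) simp
qed

lemma worst_start_le: "(\<And>\<delta>. \<delta> \<in> Delta J dhat k \<Longrightarrow> est \<delta> j \<le> c) \<Longrightarrow> worst_start k j \<le> c"
  unfolding worst_start_def by (rule cSUP_least) (use zero_in_Delta[of J dhat k] in auto)

lemma worst_start_nonneg: "k \<le> \<Gamma> \<Longrightarrow> j \<in> Jb \<Longrightarrow> 0 \<le> worst_start k j"
  using worst_start_ge[OF _ _ zero_in_Delta] est_nonneg[OF zero_in_Delta] by (meson order_trans)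

lemma worst_start_finish:
  assumes "k \<le> \<Gamma>" "j \<in> Jb"
  shows "worst_start k j + p j \<le> Qr"
proof -
  have "est \<delta> j \<le> Qr - p j" if "\<delta> \<in> Delta J dhat k" for \<delta>
    using est_finish_le[OF subsetD[OF Delta_mono[OF assms(1)] that] assms(2)]
      Delta_nonneg[OF that dhat_nn, of j] by simp
  then show ?thesis
    using worst_start_le[of k j "Qr - p j"] by simp
qed

lemma worst_start_finish_deviating:
  assumes "k < \<Gamma>" "j \<in> Jb"
  shows "worst_start k j + p j + dhat j \<le> Qr"
proof -
  have "est \<delta> j \<le> Qr - p j - dhat j" if \<delta>: "\<delta> \<in> Delta J dhat k" for \<delta>
  proof -
    obtain \<delta>' where \<delta>': "\<delta>' \<in> Delta J dhat (Suc k)" "est \<delta> j + dhat j \<le> est \<delta>' j + \<delta>' j"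
      using est_deviate[OF \<delta> assms] by blast
    show ?thesis
      using est_finish_le[OF subsetD[OF Delta_mono[OF Suc_leI[OF assms(1)]] \<delta>'(1)] assms(2)] \<delta>'(2)
      by simp
  qed
  then show ?thesis
    using worst_start_le[of k j "Qr - p j - dhat j"] by simp
qed

lemma worst_start_arc:
  assumes "(i, j) \<in> E \<sigma>" "k \<le> \<Gamma>"
  shows "worst_start k i + p i \<le> worst_start k j"
proof -
  have i: "i \<in> Jb" and j: "j \<in> Jb"
    using assms(1) E_subset by auto
  have "est \<delta> i \<le> worst_start k j - p i" if \<delta>: "\<delta> \<in> Delta J dhat k" for \<delta>
  proof -
    have \<delta>\<Gamma>: "\<delta> \<in> Delta J dhat \<Gamma>"
      using subsetD[OF Delta_mono[OF assms(2)] \<delta>] .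
    show ?thesis
      using is_schedule_arc[OF is_schedule_est[OF \<delta>\<Gamma>] assms(1)] worst_start_ge[OF assms(2) j \<delta>]
        Delta_nonneg[OF \<delta> dhat_nn, of i] by simp
  qed
  then show ?thesis
    using worst_start_le[of k i "worst_start k j - p i"] by simp
qed

lemma worst_start_arc_deviating:
  assumes "(i, j) \<in> E \<sigma>" "k < \<Gamma>"
  shows "worst_start k i + p i + dhat i \<le> worst_start (Suc k) j"
proof -
  have i: "i \<in> Jb" and j: "j \<in> Jb"
    using assms(1) E_subset by auto
  have "est \<delta> i \<le> worst_start (Suc k) j - p i - dhat i" if \<delta>: "\<delta> \<in> Delta J dhat k" for \<delta>
  proof -
    obtain \<delta>' where \<delta>': "\<delta>' \<in> Delta J dhat (Suc k)" "est \<delta> i + dhat i \<le> est \<delta>' i + \<delta>' i"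
      using est_deviate[OF \<delta> assms(2) i] by blast
    have "\<delta>' \<in> Delta J dhat \<Gamma>"
      using subsetD[OF Delta_mono[OF Suc_leI[OF assms(2)]] \<delta>'(1)] .
    then show ?thesis
      using is_schedule_arc[OF is_schedule_est assms(1)] worst_start_ge[OF Suc_leI[OF assms(2)] j \<delta>'(1)] \<delta>'(2)
      by fastforce
  qed
  then show ?thesis
    using worst_start_le[of k i "worst_start (Suc k) j - p i - dhat i"] by simp
qed

(* The sink is pinned to Qr because layer Gamma admits no deviation, while the objective x^Gamma_t
   has to reach Q_Gamma(sigma). *)
lemma Fadj_feasible_worst_starts:
  assumes bin: "binary_on P \<sigma>" and jobs: "J \<noteq> {}" and Qr_le: "Qr \<le> Mbar"
  shows "feasible \<sigma> f (\<lambda>\<gamma> j. if j = t then Qr else worst_start (\<Gamma> - \<gamma>) j)"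
proof (rule Fadj_feasibleI[OF bin flow])
  have "0 \<le> Qr"
    using Q_Gamma_nonneg[of \<sigma>] Q_eq by simp
  then show "0 \<le> (if j = t then Qr else worst_start (\<Gamma> - \<gamma>) j)" if "j \<in> Jb" for \<gamma> j
    using worst_start_nonneg[OF _ that] by simp
  show "(if i = t then Qr else worst_start (\<Gamma> - \<gamma>) i) + p i \<le> Mbar" if "i \<in> Jb" for \<gamma> i
    using worst_start_finish[OF _ that, of "\<Gamma> - \<gamma>"] Qr_le p_t by (cases "i = t") auto
  show "(if i = t then Qr else worst_start (\<Gamma> - Suc \<gamma>) i) + p i + dhat i \<le> Mbar"
    if "\<gamma> < \<Gamma>" "i \<in> Jb" for \<gamma> i
    using worst_start_finish_deviating[OF _ that(2), of "\<Gamma> - Suc \<gamma>"] that(1) Qr_le p_t dhat_t by fastforce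
  show "(if i = t then Qr else worst_start (\<Gamma> - \<gamma>) i) + p i \<le> (if j = t then Qr else worst_start (\<Gamma> - \<gamma>) j)"
    if "(i, j) \<in> E \<sigma>" for \<gamma> i j
    using no_arc_from_sink[OF jobs, of j] worst_start_arc[OF that] worst_start_finish[of "\<Gamma> - \<gamma>" i]
      E_subset that by fastforce
  show "(if i = t then Qr else worst_start (\<Gamma> - Suc \<gamma>) i) + p i + dhat i
      \<le> (if j = t then Qr else worst_start (\<Gamma> - \<gamma>) j)"
    if "(i, j) \<in> E \<sigma>" "\<gamma> < \<Gamma>" for \<gamma> i j
    using no_arc_from_sink[OF jobs, of j] worst_start_arc_deviating[OF that(1), of "\<Gamma> - Suc \<gamma>"]
      worst_start_finish_deviating[of "\<Gamma> - Suc \<gamma>" i] E_subset that Suc_diff_Suc[OF that(2)]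
    by fastforce
qed simp

end

lemma Fadj_feasible_no_jobs:
  assumes "J = {}" "binary_on P \<sigma>" "flow_ok J s t A Res r R \<sigma> f" "0 \<le> Mbar"
  shows "feasible \<sigma> f (\<lambda>_ _. 0)"
proof -
  have "p i = 0" "dhat i = 0" if "i \<in> Jb" for i
    using that assms(1) p_s p_t dhat_s dhat_t by (auto simp: Jbar_def)
  then show ?thesis
    using assms(2-4) E_subset by (intro Fadj_feasibleI) fastforce+
qed

lemma M_adj_attained:
  assumes "M \<noteq> \<infinity>"
  obtains \<sigma> where "\<sigma> \<in> SigmaSet J s t A Res r R" "Q \<sigma> = M"
proof -
  have "SigmaSet J s t A Res r R \<noteq> {}"
    using assms by (auto simp: M_adj_def top_ereal_def)
  then have "M \<in> Q ` SigmaSet J s t A Res r R"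
    unfolding M_adj_def using finite_SigmaSet by (simp add: cInf_eq_Min)
  then show ?thesis
    using that by (metis imageE)
qed

lemma Fadj_attains_M_adj:
  assumes Mbar: "M \<le> ereal Mbar" and finite_M: "M \<noteq> \<infinity>"
  shows "\<exists>\<sigma> f x. feasible \<sigma> f x \<and> ereal (x \<Gamma> t) \<le> M"
proof -
  obtain \<sigma> where \<sigma>: "\<sigma> \<in> SigmaSet J s t A Res r R" "Q \<sigma> = M"
    using M_adj_attained[OF finite_M] by blast
  then obtain f where bin: "binary_on P \<sigma>" and flow: "flow_ok J s t A Res r R \<sigma> f"
    by (auto simp: SigmaSet_def)
  obtain Qr where Qr: "M = ereal Qr"
    using finite_M M_adj_nonneg by (cases M) auto
  show ?thesis
  proof (cases "J = {}")
    case True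
    \<comment> \<open>without jobs, A_sigma may contain the arc (t, s), ruling out the worst-start witness\<close>
    have "0 \<le> Mbar"
      using M_adj_nonneg Mbar by (simp add: Qr)
    then show ?thesis
      using Fadj_feasible_no_jobs[OF True bin flow] M_adj_nonneg by (auto simp: zero_ereal_def)
  next
    case False
    then show ?thesis
      using Fadj_feasible_worst_starts[OF flow _ bin False] \<sigma>(2) Mbar Qr by fastforce
  qed
qed

lemma Fadj_optimal_value:
  assumes "M \<le> ereal Mbar"
  shows "(INF (\<sigma>, f, x)\<in>{(\<sigma>, f, x). feasible \<sigma> f x}. ereal (x \<Gamma> t)) = M"
proof (rule antisym)
  show "(INF (\<sigma>, f, x)\<in>{(\<sigma>, f, x). feasible \<sigma> f x}. ereal (x \<Gamma> t)) \<le> M"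
  proof (cases "M = \<infinity>")
    case False
    then obtain \<sigma> f x where "feasible \<sigma> f x" "ereal (x \<Gamma> t) \<le> M"
      using Fadj_attains_M_adj[OF assms] by blast
    then show ?thesis
      by (intro INF_lower2[of "(\<sigma>, f, x)"]) auto
  qed simp
  show "M \<le> (INF (\<sigma>, f, x)\<in>{(\<sigma>, f, x). feasible \<sigma> f x}. ereal (x \<Gamma> t))"
    unfolding M_adj_def
    by (auto intro!: INF_greatest INF_lower2[OF Fadj_feasible_SigmaSet] Q_Gamma_le_Fadj_objective)
qed

end

theorem theorem4:
  fixes J :: "'a set" and s t :: 'a and A :: "('a \<times> 'a) set"
    and Res :: "'r set" and r :: "'a \<Rightarrow> 'r \<Rightarrow> real" and R :: "'r \<Rightarrow> real"
    and p dhat :: "'a \<Rightarrow> real" and \<Gamma> :: nat and Mbar :: real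
  assumes finJ: "finite J" and finRes: "finite Res"
    and sJ: "s \<notin> J" and tJ: "t \<notin> J" and st: "s \<noteq> t"
    and A_sub: "A \<subseteq> Jbar J s t \<times> Jbar J s t"
    and acyc: "acyclic A"
    and source: "\<forall>j\<in>Jbar J s t. (\<nexists>i. (i, j) \<in> A) \<longleftrightarrow> j = s"
    and sink: "\<forall>i\<in>Jbar J s t. (\<nexists>j. (i, j) \<in> A) \<longleftrightarrow> i = t"
    and on_path: "\<forall>j\<in>Jbar J s t. (s, j) \<in> A\<^sup>* \<and> (j, t) \<in> A\<^sup>*"
    and p_pos: "\<forall>i\<in>J. p i > 0" and p_s: "p s = 0" and p_t: "p t = 0"
    and dhat_nn: "\<forall>i\<in>J. dhat i \<ge> 0" and dhat_s: "dhat s = 0" and dhat_t: "dhat t = 0"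
    and r_nn: "\<forall>i\<in>J. \<forall>k\<in>Res. r i k \<ge> 0" and R_nn: "\<forall>k\<in>Res. R k \<ge> 0"
    and Mbar_ub: "M_adj J s t A Res r R p dhat \<Gamma> \<le> ereal Mbar"
  shows "(INF (\<sigma>, f, x)\<in>{(\<sigma>, f, x). Fadj_feasible J s t A Res r R p dhat \<Gamma> Mbar \<sigma> f x}.
            ereal (x \<Gamma> t)) = M_adj J s t A Res r R p dhat \<Gamma>
       \<and> (\<forall>\<sigma> f x. Fadj_feasible J s t A Res r R p dhat \<Gamma> Mbar \<sigma> f x
            \<and> (\<forall>\<sigma>' f' x'. Fadj_feasible J s t A Res r R p dhat \<Gamma> Mbar \<sigma>' f' x' \<longrightarrow> x \<Gamma> t \<le> x' \<Gamma> t)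
            \<longrightarrow> Q_Gamma J s t p dhat \<Gamma> \<sigma> = M_adj J s t A Res r R p dhat \<Gamma>)"
proof -
  interpret adjustable_rcpsp J s t A Res r R p dhat \<Gamma> Mbar
    using finJ sJ tJ A_sub acyc on_path p_pos p_s p_t dhat_nn dhat_s dhat_t
    by unfold_locales blast+
  note optimal_value = Fadj_optimal_value[OF Mbar_ub]
  have "Q \<sigma> = M" if feas: "feasible \<sigma> f x"
    and opt: "\<forall>\<sigma>' f' x'. feasible \<sigma>' f' x' \<longrightarrow> x \<Gamma> t \<le> x' \<Gamma> t" for \<sigma> f x
  proof (rule antisym)
    have "ereal (x \<Gamma> t) \<le> (INF (\<sigma>, f, x)\<in>{(\<sigma>, f, x). feasible \<sigma> f x}. ereal (x \<Gamma> t))"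
      using opt by (auto intro!: INF_greatest)
    then show "Q \<sigma> \<le> M"
      using Q_Gamma_le_Fadj_objective[OF feas] optimal_value by simp
    show "M \<le> Q \<sigma>"
      unfolding M_adj_def by (rule INF_lower[OF Fadj_feasible_SigmaSet[OF feas]])
  qed
  then show ?thesis
    using optimal_value by blast
qed

end
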